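(* Consider a unidirectional ring network of $M$ nodes (in the setting described in the context) under non-preemptive fixed-priority (FP) multiplexing, where each node $k$ offers a strict rate-latency service curve $\beta^k(t)=R^k(t-T^k)^+$ and each flow $i$ is leaky-bucket constrained with initial arrival curve $\sigma_i^0+\rho_i t$ at its source and arrival curve $\sigma_i^{k\ominus1}+\rho_i t$ at the input of each node $k$ on its path. Let $f$ be a flow and $n\in[1,h_f]$. Then the service curve offered to $f$ along $subpath_f(n)$ is the rate-latency curve $$\beta_f^{subpath_f(n)}(t)=R^{subpath_f(n)}\bigl(t-T^{subpath_f(n)}\bigr)^+,$$ where $$R^{subpath_f(n)}=\min_{k\in subpath_f(n)}\Bigl[R^k-\sum_{j\in hp_f^k}\rho_j\Bigr],$$ $$T^{subpath_f(n)}=\sum_{k\in subpath_f(n)}\Bigl(T^k+\frac{\max_{j\in lp_f^k}L_{max}(j)}{R^k}\Bigr)+\sum_{i\in\mathbb{K}_{\le f}(n)}\frac{\sigma_i^{f.first\ominus1}\,1_{\{i\ni f.first,\ i.first\neq f.first\}}}{R^{subpath_f(n)}}$$ $$\qquad+\sum_{i\in\mathbb{K}_{\le f}(n)}\frac{\sigma_i^0\,1_{\{f\ni i.first\}}+\rho_i\sum_{j\in subpath_f(n)\cap path_i}\Bigl(T^j+\frac{\max_{p\in lp_f^j}L_{max}(p)}{R^j}\Bigr)}{R^{subpath_f(n)}}.$$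
   Context: Network Calculus setting: flows are described by cumulative functions $F(t)$; $\alpha$ is an arrival curve if $F\le F\otimes\alpha$ with $(f\otimes g)(t)=\inf_{0\le s\le t}\{f(t-s)+g(s)\}$; $\beta$ is a service curve if output $F^*\ge F\otimes\beta$, strict if $F^*(t)-F^*(s)\ge\beta(t-s)$ on every backlogged period $(s,t)$. $[x]^+=\max(x,0)$. A service curve offered to $f$ along a subpath relates the input of $f$ at the first node of the subpath to its output at its last node. Ring model: nodes $1,\dots,M$ in a unidirectional ring, $l\oplus k=(l+k)\bmod M$, $l\ominus k=(l-k)\bmod M$. Each flow $i$ in a fixed finite set has path $path_i=(0,i.first,i.first\oplus1,\dots,i.first\oplus(h_i-1))$ with virtual source $0$, first hop $i.first$, $h_i\le M$ hops; $subpath_i(n)=(0,i.first,\dots,i.first\oplus(n-1))$. "$i\ni k$" means flow $i$ crosses node $k$. $\sigma_i^{k\ominus1}$ is the burst of flow $i$'s arrival curve at the input of node $k$; $\sigma_i^0$ its initial burst. The network is stable: $\sum_{i\ni k}\rho_i\le R^k$ for all $k$. FP notation: each flow $i$ has priority level $P(i)$ (0 is highest) and maximum packet length $L_{max}(i)$ (including protocol overhead); packets are transmitted non-preemptively, higher priority served first, flows within the same priority served in arbitrary order. $hp_f^k=\{i\neq f: i\ni k,\ P(i)\le P(f)\}$, $lp_f^k=\{i\ni k: P(i)>P(f)\}$ (the max over an empty set is taken as $0$), and $\mathbb{K}_{\le f}(n)=\{i\neq f:\exists k\in subpath_f(n),\ i\ni k,\ P(i)\le P(f)\}$. *)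

theory Defs
  imports "HOL-Analysis.Analysis"
begin

definition cumulative :: "(real \<Rightarrow> real) \<Rightarrow> bool" where
  "cumulative F \<longleftrightarrow> mono F \<and> (\<forall>t\<le>0. F t = 0)"

definition minplus_conv :: "(real \<Rightarrow> real) \<Rightarrow> (real \<Rightarrow> real) \<Rightarrow> real \<Rightarrow> real" where
  "minplus_conv f g t = (INF s\<in>{0..t}. f (t - s) + g s)"

definition arrival_curve :: "(real \<Rightarrow> real) \<Rightarrow> (real \<Rightarrow> real) \<Rightarrow> bool" where
  "arrival_curve F \<alpha> \<longleftrightarrow> (\<forall>t\<ge>0. F t \<le> minplus_conv F \<alpha> t)"

definition service_curve :: "(real \<Rightarrow> real) \<Rightarrow> (real \<Rightarrow> real) \<Rightarrow> (real \<Rightarrow> real) \<Rightarrow> bool" where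
  "service_curve F Fs \<beta> \<longleftrightarrow> (\<forall>t\<ge>0. minplus_conv F \<beta> t \<le> Fs t)"

definition rate_latency :: "real \<Rightarrow> real \<Rightarrow> real \<Rightarrow> real" where
  "rate_latency R T t = R * max 0 (t - T)"

definition strict_service :: "'f set \<Rightarrow> ('f \<Rightarrow> real \<Rightarrow> real) \<Rightarrow> ('f \<Rightarrow> real \<Rightarrow> real)
    \<Rightarrow> (real \<Rightarrow> real) \<Rightarrow> bool" where
  "strict_service C In Out \<beta> \<longleftrightarrow>
     (\<forall>s t. s < t \<longrightarrow> (\<forall>u\<in>{s<..<t}. (\<Sum>i\<in>C. In i u - Out i u) > 0) \<longrightarrow>
        (\<Sum>i\<in>C. Out i t - Out i s) \<ge> \<beta> (t - s))"

text \<open>Tx is the set of packet transmissions (j, a, b): a packet of flow j is transmitted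
  during (a, b); transmissions do not overlap; the output of a flow only grows during its own
  transmissions; a packet has length at most Lmax j; a packet of flow j can only start
  transmission at a time a at which no flow of strictly higher priority (smaller level) is
  backlogged.  Flows of the same priority are served in arbitrary order (no constraint).\<close>
definition np_fp_server :: "'f set \<Rightarrow> ('f \<Rightarrow> nat) \<Rightarrow> ('f \<Rightarrow> real) \<Rightarrow> ('f \<Rightarrow> real \<Rightarrow> real)
    \<Rightarrow> ('f \<Rightarrow> real \<Rightarrow> real) \<Rightarrow> ('f \<times> real \<times> real) set \<Rightarrow> bool" where
  "np_fp_server C P Lmax In Out Tx \<longleftrightarrow>
     (\<forall>i\<in>C. \<forall>t. Out i t \<le> In i t) \<and>
     (\<forall>(j, a, b)\<in>Tx. j \<in> C \<and> a < b \<and> Out j b - Out j a \<le> Lmax j \<and>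
                      (\<forall>i\<in>C. P i < P j \<longrightarrow> In i a \<le> Out i a)) \<and>
     (\<forall>x\<in>Tx. \<forall>y\<in>Tx. x \<noteq> y \<longrightarrow>
         snd (snd x) \<le> fst (snd y) \<or> snd (snd y) \<le> fst (snd x)) \<and>
     (\<forall>i\<in>C. \<forall>u v. u \<le> v \<longrightarrow> (\<forall>(j, a, b)\<in>Tx. j = i \<longrightarrow> b \<le> u \<or> v \<le> a) \<longrightarrow>
         Out i v = Out i u)"

text \<open>Nodes are 1..M; l (+) m on the ring and the predecessor l (-) 1.\<close>
definition ring_add :: "nat \<Rightarrow> nat \<Rightarrow> nat \<Rightarrow> nat" where
  "ring_add M l m = (l + m - 1) mod M + 1"

definition ring_prev :: "nat \<Rightarrow> nat \<Rightarrow> nat" where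
  "ring_prev M l = (l + M - 2) mod M + 1"

text \<open>Real (non-virtual) nodes of subpath_i(n) = (0, i.first, ..., i.first (+) (n-1)).\<close>
definition subpath_nodes :: "nat \<Rightarrow> ('f \<Rightarrow> nat) \<Rightarrow> 'f \<Rightarrow> nat \<Rightarrow> nat set" where
  "subpath_nodes M first i n = {ring_add M (first i) m | m. m < n}"

definition path_nodes :: "nat \<Rightarrow> ('f \<Rightarrow> nat) \<Rightarrow> ('f \<Rightarrow> nat) \<Rightarrow> 'f \<Rightarrow> nat set" where
  "path_nodes M first h i = subpath_nodes M first i (h i)"

definition crosses :: "nat \<Rightarrow> ('f \<Rightarrow> nat) \<Rightarrow> ('f \<Rightarrow> nat) \<Rightarrow> 'f \<Rightarrow> nat \<Rightarrow> bool" where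
  "crosses M first h i k \<longleftrightarrow> k \<in> path_nodes M first h i"

text \<open>Index of the node preceding k on path_i: 0 (virtual source) if k = i.first,
  otherwise k (-) 1.  The cumulative function of flow i with index m is its output at
  node m (m = 0: the arrival process at the source).\<close>
definition in_idx :: "nat \<Rightarrow> ('f \<Rightarrow> nat) \<Rightarrow> 'f \<Rightarrow> nat \<Rightarrow> nat" where
  "in_idx M first i k = (if k = first i then 0 else ring_prev M k)"

definition hp_set :: "'f set \<Rightarrow> nat \<Rightarrow> ('f \<Rightarrow> nat) \<Rightarrow> ('f \<Rightarrow> nat) \<Rightarrow> ('f \<Rightarrow> nat)
    \<Rightarrow> 'f \<Rightarrow> nat \<Rightarrow> 'f set" where
  "hp_set Fl M first h P f k = {i\<in>Fl. i \<noteq> f \<and> crosses M first h i k \<and> P i \<le> P f}"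

definition lp_set :: "'f set \<Rightarrow> nat \<Rightarrow> ('f \<Rightarrow> nat) \<Rightarrow> ('f \<Rightarrow> nat) \<Rightarrow> ('f \<Rightarrow> nat)
    \<Rightarrow> 'f \<Rightarrow> nat \<Rightarrow> 'f set" where
  "lp_set Fl M first h P f k = {i\<in>Fl. crosses M first h i k \<and> P i > P f}"

definition max_lp :: "'f set \<Rightarrow> nat \<Rightarrow> ('f \<Rightarrow> nat) \<Rightarrow> ('f \<Rightarrow> nat) \<Rightarrow> ('f \<Rightarrow> nat)
    \<Rightarrow> ('f \<Rightarrow> real) \<Rightarrow> 'f \<Rightarrow> nat \<Rightarrow> real" where
  "max_lp Fl M first h P Lmax f k =
     (if lp_set Fl M first h P f k = {} then 0 else Max (Lmax ` lp_set Fl M first h P f k))"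

definition K_le :: "'f set \<Rightarrow> nat \<Rightarrow> ('f \<Rightarrow> nat) \<Rightarrow> ('f \<Rightarrow> nat) \<Rightarrow> ('f \<Rightarrow> nat)
    \<Rightarrow> 'f \<Rightarrow> nat \<Rightarrow> 'f set" where
  "K_le Fl M first h P f n =
     {i\<in>Fl. i \<noteq> f \<and> (\<exists>k\<in>subpath_nodes M first f n. crosses M first h i k) \<and> P i \<le> P f}"

end

theory Submission
  imports Defs
begin

text \<open>Fix t and walk the subpath of f backwards from tt n = t. At node m, going back to
  (nearly) the start tt (m - 1) of the backlogged period of the flows of priority at most P f,
  this group is served at rate R after latency T plus one lower-priority packet, since
  transmission is non-preemptive. Summing over the nodes, the increments of f telescope to its
  end-to-end increment A f (node n) t - A f 0 (tt 0). Those of an interfering flow i telescope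
  along each run of consecutive hops it shares with f, and its arrival curve at the entry of
  the run bounds them by a burst plus rho i times the elapsed time. Charging rho i against the
  residual rate R - (sum of the rates of the interfering flows at the node) leaves the rate
  Rsub for f, after the latency Tsub.\<close>

section \<open>Network calculus and non-preemptive fixed-priority servers\<close>

lemma cumulative_nonneg: "cumulative F \<Longrightarrow> 0 \<le> F x"
  unfolding cumulative_def mono_def by (cases "x \<le> 0") (auto, metis linear)

lemma minplus_conv_le:
  assumes "cumulative F" "\<And>s. 0 \<le> s \<Longrightarrow> s \<le> t \<Longrightarrow> b \<le> \<beta> s" "0 \<le> s" "s \<le> t"
  shows "minplus_conv F \<beta> t \<le> F (t - s) + \<beta> s"
  unfolding minplus_conv_def
proof (rule cINF_lower)
  show "bdd_below ((\<lambda>s. F (t - s) + \<beta> s) ` {0..t})"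
    by (rule bdd_belowI[of _ b]) (use assms cumulative_nonneg[OF assms(1)] in \<open>force intro: add_increasing\<close>)
qed (use assms in auto)

lemma leaky_bucket_increment_le:
  assumes "arrival_curve F (\<lambda>t. \<sigma> + \<rho> * t)" "cumulative F" "0 \<le> \<rho>" "0 \<le> x" "x \<le> y"
  shows "F y \<le> F x + \<sigma> + \<rho> * (y - x)"
proof -
  have "F y \<le> minplus_conv F (\<lambda>t. \<sigma> + \<rho> * t) y"
    using assms unfolding arrival_curve_def by auto
  also have "\<dots> \<le> F (y - (y - x)) + (\<sigma> + \<rho> * (y - x))"
    by (rule minplus_conv_le[where b = \<sigma>]) (use assms in auto)
  finally show ?thesis by simp
qed

lemma np_fp_serverD:
  assumes "np_fp_server C P Lmax In Out Tx"
  shows np_fp_server_out_le_in: "\<And>i t. i \<in> C \<Longrightarrow> Out i t \<le> In i t"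
    and np_fp_server_transmission: "\<And>j a b. (j, a, b) \<in> Tx \<Longrightarrow> j \<in> C \<and> a < b \<and>
          Out j b - Out j a \<le> Lmax j \<and> (\<forall>i\<in>C. P i < P j \<longrightarrow> In i a \<le> Out i a)"
    and np_fp_server_disjoint: "\<And>x y. x \<in> Tx \<Longrightarrow> y \<in> Tx \<Longrightarrow> x \<noteq> y \<Longrightarrow>
          snd (snd x) \<le> fst (snd y) \<or> snd (snd y) \<le> fst (snd x)"
    and np_fp_server_idle: "\<And>i u v. i \<in> C \<Longrightarrow> u \<le> v \<Longrightarrow>
          (\<forall>(j, a, b)\<in>Tx. j = i \<longrightarrow> b \<le> u \<or> v \<le> a) \<Longrightarrow> Out i v = Out i u"
  using assms unfolding np_fp_server_def by (blast, fast, blast, blast)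

lemma np_fp_output_increment_le:
  assumes fp: "np_fp_server C P Lmax In Out Tx" and j: "j \<in> C" and mono: "mono (Out j)"
    and no_start: "\<And>a b. (j, a, b) \<in> Tx \<Longrightarrow> s < a \<Longrightarrow> a < \<tau> \<Longrightarrow> False"
  shows "Out j \<tau> - Out j s \<le> (if \<exists>a b. (j, a, b) \<in> Tx \<and> a \<le> s \<and> s < b then Lmax j else 0)"
proof (cases "\<exists>a b. (j, a, b) \<in> Tx \<and> a \<le> s \<and> s < b")
  case False
  show ?thesis
  proof (cases "s \<le> \<tau>")
    case True
    have "\<forall>(j', a, b)\<in>Tx. j' = j \<longrightarrow> b \<le> s \<or> \<tau> \<le> a"
      using False no_start by (fastforce simp: not_le)
    then have "Out j \<tau> = Out j s" using np_fp_server_idle[OF fp j True] by blast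
    then show ?thesis using False by auto
  next
    case False
    then show ?thesis using mono \<open>\<not> (\<exists>a b. _)\<close> by (auto simp: mono_def)
  qed
next
  case True
  then obtain a b where ab: "(j, a, b) \<in> Tx" "a \<le> s" "s < b" by blast
  have packet: "Out j b - Out j a \<le> Lmax j"
    using np_fp_server_transmission[OF fp ab(1)] by blast
  have "Out j a \<le> Out j s" using mono ab by (auto simp: mono_def)
  moreover have "Out j \<tau> \<le> Out j b"
  proof (cases "\<tau> \<le> b")
    case True
    then show ?thesis using mono by (auto simp: mono_def)
  next
    case False
    have "b' \<le> b" if ab': "(j, a', b') \<in> Tx" "\<not> \<tau> \<le> a'" for a' b'
    proof (cases "(j, a', b') = (j, a, b)")
      case False
      then have "b \<le> a' \<or> b' \<le> a" using np_fp_server_disjoint[OF fp ab(1) ab'(1)] by auto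
      then show ?thesis using no_start[OF ab'(1)] ab'(2) ab by force
    qed simp
    then have "Out j \<tau> = Out j b" using np_fp_server_idle[OF fp j, of b \<tau>] False by force
    then show ?thesis by simp
  qed
  ultimately show ?thesis using packet True by simp
qed

text \<open>While some flow of G is backlogged no lower-priority packet starts, so the lower-priority
  flows together send at most the one packet in transmission at time s.\<close>
lemma np_fp_low_priority_output_le:
  assumes fp: "np_fp_server C P Lmax In Out Tx"
    and finC: "finite C" and GC: "G \<subseteq> C"
    and mono: "\<And>i. i \<in> C \<Longrightarrow> mono (Out i)"
    and prio: "\<And>i j. i \<in> G \<Longrightarrow> j \<in> C - G \<Longrightarrow> P i < P j"
    and Lmax_le: "\<And>j. j \<in> C - G \<Longrightarrow> Lmax j \<le> L" and "0 \<le> L"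
    and backlogged: "\<And>u. s < u \<Longrightarrow> u < \<tau> \<Longrightarrow> \<exists>i\<in>G. Out i u < In i u"
  shows "(\<Sum>j\<in>C - G. Out j \<tau> - Out j s) \<le> L"
proof -
  define J where "J = {j\<in>C - G. \<exists>a b. (j, a, b) \<in> Tx \<and> a \<le> s \<and> s < b}"
  have no_start: False if tx: "(j, a, b) \<in> Tx" "j \<in> C - G" "s < a" "a < \<tau>" for j a b
  proof -
    obtain i where "i \<in> G" "Out i a < In i a" using backlogged tx(3,4) by blast
    then show False using np_fp_server_transmission[OF fp tx(1)] prio tx(2) GC by force
  qed
  have J_subsingleton: "j1 = j2" if j: "j1 \<in> J" "j2 \<in> J" for j1 j2
  proof (rule ccontr)
    assume "j1 \<noteq> j2"
    obtain a1 b1 a2 b2 where "(j1, a1, b1) \<in> Tx" "a1 \<le> s" "s < b1"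
      "(j2, a2, b2) \<in> Tx" "a2 \<le> s" "s < b2" using j unfolding J_def by blast
    then show False using np_fp_server_disjoint[of C P Lmax In Out Tx "(j1, a1, b1)" "(j2, a2, b2)"]
      fp \<open>j1 \<noteq> j2\<close> by auto
  qed
  have "(\<Sum>j\<in>C - G. Out j \<tau> - Out j s) \<le> (\<Sum>j\<in>C - G. if j \<in> J then Lmax j else 0)"
  proof (rule sum_mono)
    fix j assume j: "j \<in> C - G"
    show "Out j \<tau> - Out j s \<le> (if j \<in> J then Lmax j else 0)"
      using np_fp_output_increment_le[OF fp _ mono no_start, of j] j unfolding J_def by auto
  qed
  also have "\<dots> = (\<Sum>j\<in>J. Lmax j)"
    using finC by (simp add: sum.If_cases J_def Int_absorb1 Int_def)
  also have "\<dots> \<le> L"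
  proof (cases "J = {}")
    case False
    then obtain j where "J = {j}" using J_subsingleton by blast
    then show ?thesis using Lmax_le unfolding J_def by auto
  qed (use \<open>0 \<le> L\<close> in simp)
  finally show ?thesis .
qed

lemma np_fp_busy_period_service:
  assumes fp: "np_fp_server C P Lmax In Out Tx"
    and strict: "strict_service C In Out (rate_latency R T)"
    and finC: "finite C" and GC: "G \<subseteq> C"
    and mono: "\<And>i. i \<in> C \<Longrightarrow> mono (Out i)"
    and prio: "\<And>i j. i \<in> G \<Longrightarrow> j \<in> C - G \<Longrightarrow> P i < P j"
    and Lmax_le: "\<And>j. j \<in> C - G \<Longrightarrow> Lmax j \<le> L" and L: "0 \<le> L" and R: "0 < R"
    and "s < \<tau>" and backlogged: "\<And>u. s < u \<Longrightarrow> u < \<tau> \<Longrightarrow> \<exists>i\<in>G. Out i u < In i u"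
  shows "R * (\<tau> - s - (T + L / R)) \<le> (\<Sum>i\<in>G. Out i \<tau> - Out i s)"
proof -
  have "(\<Sum>i\<in>C. In i u - Out i u) > 0" if u: "u \<in> {s<..<\<tau>}" for u
  proof -
    obtain i where i: "i \<in> G" "Out i u < In i u" using backlogged u by auto
    then have "0 < In i u - Out i u" by simp
    also have "\<dots> \<le> (\<Sum>i\<in>C. In i u - Out i u)"
      by (rule member_le_sum) (use i GC np_fp_server_out_le_in[OF fp] finC in auto)
    finally show ?thesis .
  qed
  then have "rate_latency R T (\<tau> - s) \<le> (\<Sum>i\<in>C. Out i \<tau> - Out i s)"
    using strict \<open>s < \<tau>\<close> unfolding strict_service_def by blast
  moreover have "R * (\<tau> - s - T) \<le> rate_latency R T (\<tau> - s)"
    unfolding rate_latency_def using R by (simp add: mult_left_mono)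
  moreover have "(\<Sum>i\<in>C. Out i \<tau> - Out i s)
      = (\<Sum>i\<in>G. Out i \<tau> - Out i s) + (\<Sum>j\<in>C - G. Out j \<tau> - Out j s)"
    using sum.subset_diff[OF GC finC] by (simp add: add.commute)
  moreover have "(\<Sum>j\<in>C - G. Out j \<tau> - Out j s) \<le> L"
    by (rule np_fp_low_priority_output_le[OF fp finC GC mono prio Lmax_le L backlogged])
  moreover have "R * (\<tau> - s - (T + L / R)) = R * (\<tau> - s - T) - L"
    using R by (simp add: field_simps)
  ultimately show ?thesis by linarith
qed

text \<open>s is the supremum of the times up to \<tau> at which G has caught up with its input; as the
  supremum need not be attained, \<tau>' is a caught-up time \<epsilon>-close to it.\<close>
lemma backlogged_period_start:
  fixes In Out :: "'i \<Rightarrow> real \<Rightarrow> real"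
  assumes \<tau>: "0 \<le> \<tau>" and \<epsilon>: "0 < \<epsilon>" and caught_up: "\<And>i. i \<in> G \<Longrightarrow> In i 0 \<le> Out i 0"
  obtains \<tau>' s where "0 \<le> \<tau>'" "\<tau>' \<le> s" "s \<le> \<tau>" "s - \<epsilon> < \<tau>'"
    "\<And>i. i \<in> G \<Longrightarrow> In i \<tau>' \<le> Out i \<tau>'"
    "\<And>u. s < u \<Longrightarrow> u < \<tau> \<Longrightarrow> \<exists>i\<in>G. Out i u < In i u"
proof -
  define Z where "Z = {u. 0 \<le> u \<and> u \<le> \<tau> \<and> (\<forall>i\<in>G. In i u \<le> Out i u)}"
  have Z0: "0 \<in> Z" using \<tau> caught_up by (auto simp: Z_def)
  have bdd: "bdd_above Z" by (auto simp: Z_def bdd_above_def)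
  have "0 \<le> Sup Z" using Z0 bdd by (rule cSup_upper)
  have "Sup Z \<le> \<tau>" by (rule cSup_least) (use Z0 in \<open>auto simp: Z_def\<close>)
  obtain \<tau>' where \<tau>': "\<tau>' \<in> Z" "Sup Z - \<epsilon> < \<tau>'"
    using less_cSupD[of Z "Sup Z - \<epsilon>"] Z0 \<epsilon> by auto
  show ?thesis
  proof (rule that[of \<tau>' "Sup Z"])
    show "\<tau>' \<le> Sup Z" using \<tau>'(1) bdd by (rule cSup_upper)
    show "\<exists>i\<in>G. Out i u < In i u" if u: "Sup Z < u" "u < \<tau>" for u
    proof (rule ccontr)
      assume "\<not> (\<exists>i\<in>G. Out i u < In i u)"
      then have "u \<in> Z" using u \<open>0 \<le> Sup Z\<close> unfolding Z_def by (auto simp: not_less)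
      then have "u \<le> Sup Z" using bdd by (rule cSup_upper)
      then show False using u by simp
    qed
  qed (use \<tau>' \<open>Sup Z \<le> \<tau>\<close> in \<open>auto simp: Z_def\<close>)
qed

lemma np_fp_group_service:
  assumes fp: "np_fp_server C P Lmax In Out Tx"
    and strict: "strict_service C In Out (rate_latency R T)"
    and finC: "finite C" and GC: "G \<subseteq> C"
    and mono: "\<And>i. i \<in> C \<Longrightarrow> mono (Out i)"
    and caught_up: "\<And>i. i \<in> G \<Longrightarrow> In i 0 \<le> Out i 0"
    and prio: "\<And>i j. i \<in> G \<Longrightarrow> j \<in> C - G \<Longrightarrow> P i < P j"
    and Lmax_le: "\<And>j. j \<in> C - G \<Longrightarrow> Lmax j \<le> L" and L: "0 \<le> L"
    and R: "0 < R" and T: "0 \<le> T" and \<tau>: "0 \<le> \<tau>" and \<epsilon>: "0 < \<epsilon>"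
  shows "\<exists>\<tau>'. 0 \<le> \<tau>' \<and> \<tau>' \<le> \<tau> \<and> (\<forall>i\<in>G. In i \<tau>' \<le> Out i \<tau>) \<and>
           R * (\<tau> - \<tau>' - \<epsilon> - (T + L / R)) \<le> (\<Sum>i\<in>G. Out i \<tau> - In i \<tau>')"
proof -
  obtain \<tau>' s where \<tau>': "0 \<le> \<tau>'" "\<tau>' \<le> s" "s \<le> \<tau>" "s - \<epsilon> < \<tau>'"
      "\<And>i. i \<in> G \<Longrightarrow> In i \<tau>' \<le> Out i \<tau>'"
    and backlogged: "\<And>u. s < u \<Longrightarrow> u < \<tau> \<Longrightarrow> \<exists>i\<in>G. Out i u < In i u"
    using backlogged_period_start[where In = In and Out = Out and G = G, OF \<tau> \<epsilon> caught_up] by metis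
  have mono_G: "Out i x \<le> Out i y" if "i \<in> G" "x \<le> y" for i x y
    using mono[of i] GC that by (auto simp: mono_def)
  have caught_up_s: "In i \<tau>' \<le> Out i s" if i: "i \<in> G" for i
    using \<tau>'(5)[OF i] mono_G[OF i \<tau>'(2)] by linarith
  have "R * (\<tau> - \<tau>' - \<epsilon> - (T + L / R)) \<le> (\<Sum>i\<in>G. Out i \<tau> - In i \<tau>')"
  proof (cases "s < \<tau>")
    case True
    have "R * (\<tau> - \<tau>' - \<epsilon> - (T + L / R)) \<le> R * (\<tau> - s - (T + L / R))"
      using R \<tau>'(4) by (intro mult_left_mono) auto
    also have "\<dots> \<le> (\<Sum>i\<in>G. Out i \<tau> - Out i s)"
      by (rule np_fp_busy_period_service[OF fp strict finC GC mono prio Lmax_le L R True backlogged])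
    also have "\<dots> \<le> (\<Sum>i\<in>G. Out i \<tau> - In i \<tau>')"
      by (rule sum_mono) (use caught_up_s in auto)
    finally show ?thesis .
  next
    case False
    moreover have "0 \<le> L / R" using L R by simp
    ultimately have "\<tau> - \<tau>' - \<epsilon> - (T + L / R) \<le> 0" using \<tau>'(3,4) T by linarith
    then have "R * (\<tau> - \<tau>' - \<epsilon> - (T + L / R)) \<le> 0" using R by (simp add: mult_nonneg_nonpos)
    also have "0 \<le> (\<Sum>i\<in>G. Out i \<tau> - In i \<tau>')"
      by (rule sum_nonneg) (use caught_up_s False \<tau>'(3) in auto)
    finally show ?thesis .
  qed
  moreover have "In i \<tau>' \<le> Out i \<tau>" if i: "i \<in> G" for i
    using caught_up_s[OF i] mono_G[OF i \<tau>'(3)] by linarith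
  ultimately show ?thesis using \<tau>'(1-3) by (intro exI[of _ \<tau>']) auto
qed

section \<open>Ring arithmetic\<close>

lemma ring_add_zero: "1 \<le> l \<Longrightarrow> l \<le> M \<Longrightarrow> ring_add M l 0 = l"
  unfolding ring_add_def by simp

lemma ring_add_in_range: "1 \<le> M \<Longrightarrow> 1 \<le> ring_add M l m \<and> ring_add M l m \<le> M"
  unfolding ring_add_def by (simp add: Suc_leI)

lemma ring_add_inj:
  assumes "1 \<le> l" "m1 < M" "m2 < M" "ring_add M l m1 = ring_add M l m2"
  shows "m1 = m2"
proof -
  have "(l - 1 + m1) mod M = (l - 1 + m2) mod M"
    using assms(1,4) unfolding ring_add_def by (simp add: add.commute)
  then have "(int (l - 1) + int m1) mod int M = (int (l - 1) + int m2) mod int M"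
    by (metis of_nat_add zmod_int)
  then have "(int (l - 1) + int m1 - int (l - 1)) mod int M
      = (int (l - 1) + int m2 - int (l - 1)) mod int M"
    by (rule mod_diff_cong) simp
  then show ?thesis using assms(2,3) by simp
qed

lemma ring_prev_ring_add:
  assumes "1 \<le> l" "1 \<le> M" "1 \<le> m"
  shows "ring_prev M (ring_add M l m) = ring_add M l (m - 1)"
proof -
  have "(l + m - 1) mod M + 1 + M - 2 = (l + m - 1) mod M + (M - 1)" using assms by simp
  then have "ring_prev M (ring_add M l m) = ((l + m - 1) mod M + (M - 1)) mod M + 1"
    unfolding ring_prev_def ring_add_def by simp
  also have "((l + m - 1) mod M + (M - 1)) mod M = ((l + m - 1) + (M - 1)) mod M"
    by (simp add: mod_add_left_eq)
  also have "(l + m - 1) + (M - 1) = (l + (m - 1) - 1) + M" using assms by simp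
  finally show ?thesis unfolding ring_add_def by simp
qed

lemma crosses_ring_prev:
  assumes "crosses M first h i k" "k \<noteq> first i" "1 \<le> first i" "first i \<le> M" "1 \<le> M"
  shows "crosses M first h i (ring_prev M k)"
proof -
  obtain m where m: "m < h i" "k = ring_add M (first i) m"
    using assms(1) unfolding crosses_def path_nodes_def subpath_nodes_def by blast
  have "m \<noteq> 0"
  proof
    assume "m = 0"
    then show False using m(2) assms(2-4) ring_add_zero by simp
  qed
  then have "ring_prev M k = ring_add M (first i) (m - 1)" using ring_prev_ring_add assms m by simp
  then show ?thesis using m(1) unfolding crosses_def path_nodes_def subpath_nodes_def by force
qed

section \<open>Hop-by-hop bounds along a path\<close>

lemma sum_relay_telescope:
  fixes Out In :: "nat \<Rightarrow> real \<Rightarrow> real" and tt :: "nat \<Rightarrow> real"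
  assumes "a \<le> k" "\<And>m. a < m \<Longrightarrow> m \<le> k \<Longrightarrow> In m = Out (m - 1)"
  shows "(\<Sum>m=a..k. Out m (tt m) - In m (tt (m - 1))) = Out k (tt k) - In a (tt (a - 1))"
  using assms by (induction k rule: dec_induct) (simp_all add: sum.cl_ivl_Suc)

lemma relay_output_le_input:
  fixes Out In :: "nat \<Rightarrow> real \<Rightarrow> real"
  assumes "a \<le> k" "\<And>m. a < m \<Longrightarrow> m \<le> k \<Longrightarrow> In m = Out (m - 1)"
    and "\<And>m t. a \<le> m \<Longrightarrow> m \<le> k \<Longrightarrow> Out m t \<le> In m t"
  shows "Out k t \<le> In a t"
  using assms
proof (induction k rule: dec_induct)
  case (step k)
  have "Out (Suc k) t \<le> Out k t" using step.prems(1)[of "Suc k"] step.prems(2)[of "Suc k" t] step.hyps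
    by simp
  also have "\<dots> \<le> In a t" using step by simp
  finally show ?case .
qed simp

lemma run_start_exists:
  fixes n k :: nat
  assumes relay: "\<And>m. 1 \<le> m \<Longrightarrow> m \<le> n \<Longrightarrow> c m \<Longrightarrow> \<not> ent m \<Longrightarrow> 2 \<le> m \<and> c (m - 1)"
    and "1 \<le> k" "k \<le> n" "c k"
  shows "\<exists>a. 1 \<le> a \<and> a \<le> k \<and> ent a \<and> (\<forall>m. a < m \<and> m \<le> k \<longrightarrow> c m \<and> \<not> ent m)"
  using assms(2-4)
proof (induction k)
  case (Suc k)
  show ?case
  proof (cases "ent (Suc k)")
    case False
    then have "1 \<le> k" "c k" using relay[of "Suc k"] Suc.prems by auto
    then obtain a where "1 \<le> a" "a \<le> k" "ent a" "\<forall>m. a < m \<and> m \<le> k \<longrightarrow> c m \<and> \<not> ent m"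
      using Suc by auto
    then show ?thesis using False Suc.prems(3) le_Suc_eq by (intro exI[of _ a]) auto
  qed auto
qed simp

lemma run_increments_le:
  fixes Out In :: "nat \<Rightarrow> real \<Rightarrow> real" and tt sg :: "nat \<Rightarrow> real"
  assumes "a \<le> k" "ent a" "c a"
    and run: "\<And>m. a < m \<Longrightarrow> m \<le> k \<Longrightarrow> c m \<and> \<not> ent m \<and> In m = Out (m - 1)"
    and out_le_in: "\<And>m t. a \<le> m \<Longrightarrow> m \<le> k \<Longrightarrow> Out m t \<le> In m t"
    and arrival: "In a (tt k) \<le> In a (tt (a - 1)) + sg a + \<rho> * (tt k - tt (a - 1))"
  shows "(\<Sum>m=a..k. if c m then Out m (tt m) - In m (tt (m - 1)) else 0) \<le>
         (\<Sum>m=a..k. if ent m then sg m else 0) + \<rho> * (\<Sum>m=a..k. if c m then tt m - tt (m - 1) else 0)"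
proof -
  have c: "c m" if "a \<le> m" "m \<le> k" for m
    using \<open>c a\<close> run[of m] that by (cases "m = a") auto
  have relayed: "In m = Out (m - 1)" if "a < m" "m \<le> k" for m
    using run that by blast
  have "(\<Sum>m=a..k. if c m then Out m (tt m) - In m (tt (m - 1)) else 0)
      = (\<Sum>m=a..k. Out m (tt m) - In m (tt (m - 1)))"
    using c by (intro sum.cong) auto
  also have "\<dots> = Out k (tt k) - In a (tt (a - 1))"
    using sum_relay_telescope[where Out = Out and In = In, OF \<open>a \<le> k\<close> relayed] by simp
  finally have Y: "(\<Sum>m=a..k. if c m then Out m (tt m) - In m (tt (m - 1)) else 0)
      = Out k (tt k) - In a (tt (a - 1))" .
  have "(\<Sum>m=a..k. if ent m then sg m else 0) = (\<Sum>m=a..k. if m = a then sg m else 0)"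
    using run \<open>ent a\<close> by (intro sum.cong) auto
  then have S: "(\<Sum>m=a..k. if ent m then sg m else 0) = sg a" using \<open>a \<le> k\<close> by simp
  have "(\<Sum>m=a..k. if c m then tt m - tt (m - 1) else 0) = (\<Sum>m=a..k. tt m - tt (m - 1))"
    using c by (intro sum.cong) auto
  also have "\<dots> = tt k - tt (a - 1)"
    using sum_relay_telescope[OF \<open>a \<le> k\<close>, of "\<lambda>m x. x" "\<lambda>m x. x" tt] by simp
  finally have D: "(\<Sum>m=a..k. if c m then tt m - tt (m - 1) else 0) = tt k - tt (a - 1)" .
  have "Out k (tt k) \<le> In a (tt k)"
    by (rule relay_output_le_input[where Out = Out and In = In, OF \<open>a \<le> k\<close> relayed out_le_in])
  then show ?thesis unfolding Y S D using arrival by linarith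
qed

text \<open>Out m and In m are the output and input of one flow at hop m. It is present at the hops
  with c m and enters, with a leaky-bucket arrival curve of burst sg m, at the hops with ent m;
  at the other hops it is relayed from hop m - 1. Each maximal run of relayed hops is bounded
  by run_increments_le.\<close>
lemma flow_hop_increments_le:
  fixes Out In :: "nat \<Rightarrow> real \<Rightarrow> real" and tt sg :: "nat \<Rightarrow> real"
  assumes out_le_in: "\<And>m t. 1 \<le> m \<Longrightarrow> m \<le> n \<Longrightarrow> c m \<Longrightarrow> Out m t \<le> In m t"
    and ent: "\<And>m. ent m \<Longrightarrow> c m"
    and relay: "\<And>m. 1 \<le> m \<Longrightarrow> m \<le> n \<Longrightarrow> c m \<Longrightarrow> \<not> ent m \<Longrightarrow>
                  2 \<le> m \<and> c (m - 1) \<and> In m = Out (m - 1)"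
    and arrival: "\<And>m x y. 1 \<le> m \<Longrightarrow> m \<le> n \<Longrightarrow> ent m \<Longrightarrow> 0 \<le> x \<Longrightarrow> x \<le> y \<Longrightarrow>
                  In m y \<le> In m x + sg m + \<rho> * (y - x)"
    and tt_mono: "\<And>x y. x \<le> y \<Longrightarrow> y \<le> n \<Longrightarrow> tt x \<le> tt y" and "0 \<le> tt 0"
  shows "(\<Sum>m=1..n. if c m then Out m (tt m) - In m (tt (m - 1)) else 0) \<le>
         (\<Sum>m=1..n. if ent m then sg m else 0) + \<rho> * (\<Sum>m=1..n. if c m then tt m - tt (m - 1) else 0)"
proof -
  define Y where "Y a k = (\<Sum>m=a..k. if c m then Out m (tt m) - In m (tt (m - 1)) else 0)" for a k
  define S where "S a k = (\<Sum>m=a..k. if ent m then sg m else 0)" for a k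
  define D where "D a k = (\<Sum>m=a..k. if c m then tt m - tt (m - 1) else 0)" for a k
  have split: "(\<Sum>m=1..k. g m) = (\<Sum>m=1..a - 1. g m) + (\<Sum>m=a..k. g m)"
    if "1 \<le> a" "a \<le> k" for a k and g :: "nat \<Rightarrow> real"
    using sum.ub_add_nat[of 1 "a - 1" g "k - (a - 1)"] that by simp
  have "Y 1 k \<le> S 1 k + \<rho> * D 1 k" if "k \<le> n" for k
    using that
  proof (induction k rule: less_induct)
    case (less k)
    show ?case
    proof (cases "1 \<le> k \<and> c k")
      case False
      show ?thesis
      proof (cases k)
        case (Suc k')
        then have "Y 1 k = Y 1 k'" "S 1 k = S 1 k'" "D 1 k = D 1 k'"
          using False ent unfolding Y_def S_def D_def by auto
        then show ?thesis using less Suc by simp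
      qed (simp add: Y_def S_def D_def)
    next
      case True
      then obtain a where a: "1 \<le> a" "a \<le> k" "ent a" "\<forall>m. a < m \<and> m \<le> k \<longrightarrow> c m \<and> \<not> ent m"
        using run_start_exists[of n c ent k] relay less.prems by blast
      have "Y a k \<le> S a k + \<rho> * D a k"
        unfolding Y_def S_def D_def
      proof (rule run_increments_le[where Out = Out and In = In and tt = tt and c = c and ent = ent, OF a(2,3) ent[OF a(3)]])
        show "c m \<and> \<not> ent m \<and> In m = Out (m - 1)" if "a < m" "m \<le> k" for m
          using a(1,4) relay[of m] that less.prems by auto
        show "Out m t \<le> In m t" if "a \<le> m" "m \<le> k" for m t
          using out_le_in[of m] a that less.prems ent by (cases "m = a") auto
        have "a - 1 \<le> n" "a - 1 \<le> k" using a(2) less.prems by simp_all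
        then show "In a (tt k) \<le> In a (tt (a - 1)) + sg a + \<rho> * (tt k - tt (a - 1))"
          using arrival[OF a(1) _ a(3)] tt_mono[of 0 "a - 1"] tt_mono[of "a - 1" k]
            \<open>0 \<le> tt 0\<close> a(2) less.prems by fastforce
      qed
      moreover have "Y 1 (a - 1) \<le> S 1 (a - 1) + \<rho> * D 1 (a - 1)" using less a by simp
      ultimately show ?thesis
        unfolding Y_def S_def D_def split[OF a(1,2)] by (simp add: algebra_simps)
    qed
  qed
  then show ?thesis using Y_def S_def D_def by simp
qed

lemma backward_chain_exists:
  fixes Q :: "nat \<Rightarrow> real \<Rightarrow> real \<Rightarrow> bool"
  assumes step: "\<And>m \<tau>. 1 \<le> m \<Longrightarrow> m \<le> n \<Longrightarrow> 0 \<le> \<tau> \<Longrightarrow> \<exists>\<tau>'. 0 \<le> \<tau>' \<and> \<tau>' \<le> \<tau> \<and> Q m \<tau> \<tau>'"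
    and "0 \<le> t"
  shows "\<exists>tt. tt n = t \<and> (\<forall>m\<le>n. 0 \<le> tt m) \<and>
           (\<forall>m. 1 \<le> m \<longrightarrow> m \<le> n \<longrightarrow> tt (m - 1) \<le> tt m \<and> Q m (tt m) (tt (m - 1)))"
  using assms
proof (induction n arbitrary: t)
  case 0
  then show ?case by (intro exI[of _ "\<lambda>_. t"]) simp
next
  case (Suc n)
  obtain t' where t': "0 \<le> t'" "t' \<le> t" "Q (Suc n) t t'" using Suc.prems by fastforce
  obtain tt where tt: "tt n = t'" "\<forall>m\<le>n. 0 \<le> tt m"
    "\<forall>m. 1 \<le> m \<longrightarrow> m \<le> n \<longrightarrow> tt (m - 1) \<le> tt m \<and> Q m (tt m) (tt (m - 1))"
    using Suc.IH[of t'] Suc.prems(1) t'(1) by fastforce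
  show ?case
    using tt t' Suc.prems(2) by (intro exI[of _ "tt(Suc n := t)"]) (auto simp: le_Suc_eq)
qed

lemma residual_rate_latency_le:
  fixes Rs R H lat S d e :: real
  assumes "0 \<le> Rs" "Rs \<le> R - H" "0 \<le> H" "0 \<le> lat" "0 \<le> S" "R * (d - e - lat) \<le> S" "0 \<le> e"
  shows "Rs * (d - e) - (Rs + H) * lat - H * e \<le> S - H * d"
proof (cases "lat \<le> d - e")
  case True
  have "0 \<le> (R - H - Rs) * (d - e - lat)" using assms True by simp
  then show ?thesis using assms by (simp add: algebra_simps)
next
  case False
  have "0 \<le> (Rs + H) * (lat - (d - e))" using assms False by simp
  then show ?thesis using assms by (simp add: algebra_simps)
qed

section \<open>Service offered along a subpath of the ring\<close>

locale fp_ring_network =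
  fixes M :: nat and Fl :: "'f set" and first h P :: "'f \<Rightarrow> nat"
    and Lmax \<rho> :: "'f \<Rightarrow> real" and \<sigma> :: "'f \<Rightarrow> nat \<Rightarrow> real"
    and R T :: "nat \<Rightarrow> real"
    and A :: "'f \<Rightarrow> nat \<Rightarrow> real \<Rightarrow> real"
    and Tx :: "nat \<Rightarrow> ('f \<times> real \<times> real) set"
  assumes M: "M \<ge> 1"
    and finite_Fl: "finite Fl"
    and first: "\<And>i. i \<in> Fl \<Longrightarrow> 1 \<le> first i \<and> first i \<le> M"
    and hops: "\<And>i. i \<in> Fl \<Longrightarrow> 1 \<le> h i \<and> h i \<le> M"
    and Lmax_pos: "\<And>i. i \<in> Fl \<Longrightarrow> Lmax i > 0"
    and rho_nonneg: "\<And>i. i \<in> Fl \<Longrightarrow> \<rho> i \<ge> 0"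
    and sigma_nonneg: "\<And>i m. i \<in> Fl \<Longrightarrow> \<sigma> i m \<ge> 0"
    and R_pos: "\<And>k. 1 \<le> k \<Longrightarrow> k \<le> M \<Longrightarrow> R k > 0"
    and T_nonneg: "\<And>k. 1 \<le> k \<Longrightarrow> k \<le> M \<Longrightarrow> T k \<ge> 0"
    and stable: "\<And>k. 1 \<le> k \<Longrightarrow> k \<le> M \<Longrightarrow>
                   (\<Sum>i\<in>{i\<in>Fl. crosses M first h i k}. \<rho> i) \<le> R k"
    and cumul_src: "\<And>i. i \<in> Fl \<Longrightarrow> cumulative (A i 0)"
    and cumul_out: "\<And>i k. i \<in> Fl \<Longrightarrow> crosses M first h i k \<Longrightarrow> cumulative (A i k)"
    and arrival: "\<And>i k. i \<in> Fl \<Longrightarrow> crosses M first h i k \<Longrightarrow>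
                   arrival_curve (A i (in_idx M first i k))
                     (\<lambda>t. \<sigma> i (in_idx M first i k) + \<rho> i * t)"
    and strict: "\<And>k. 1 \<le> k \<Longrightarrow> k \<le> M \<Longrightarrow>
                   strict_service {i\<in>Fl. crosses M first h i k}
                     (\<lambda>i. A i (in_idx M first i k)) (\<lambda>i. A i k) (rate_latency (R k) (T k))"
    and fp: "\<And>k. 1 \<le> k \<Longrightarrow> k \<le> M \<Longrightarrow>
                   np_fp_server {i\<in>Fl. crosses M first h i k} P Lmax
                     (\<lambda>i. A i (in_idx M first i k)) (\<lambda>i. A i k) (Tx k)"
begin

lemma input_cumulative:
  assumes "i \<in> Fl" "crosses M first h i k"
  shows "cumulative (A i (in_idx M first i k))"
proof (cases "k = first i")
  case False
  then have "crosses M first h i (ring_prev M k)"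
    using crosses_ring_prev[OF assms(2) False] first[OF assms(1)] M by simp
  then show ?thesis using cumul_out assms(1) False by (simp add: in_idx_def)
qed (use cumul_src assms in \<open>simp add: in_idx_def\<close>)

lemma max_lp_nonneg: "0 \<le> max_lp Fl M first h P Lmax f k"
proof (cases "lp_set Fl M first h P f k = {}")
  case False
  then obtain j where j: "j \<in> lp_set Fl M first h P f k" by blast
  have "finite (lp_set Fl M first h P f k)" using finite_Fl unfolding lp_set_def by simp
  then have "Lmax j \<le> Max (Lmax ` lp_set Fl M first h P f k)" using j by simp
  moreover have "Lmax j > 0" using j Lmax_pos unfolding lp_set_def by simp
  ultimately show ?thesis using False unfolding max_lp_def by simp
qed (simp add: max_lp_def)

lemma Lmax_le_max_lp:
  "j \<in> lp_set Fl M first h P f k \<Longrightarrow> Lmax j \<le> max_lp Fl M first h P Lmax f k"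
  using finite_Fl unfolding max_lp_def lp_set_def by auto

lemma node_group_service:
  fixes f :: 'f
  assumes k: "1 \<le> k" "k \<le> M" and "0 \<le> \<tau>" "0 < \<epsilon>"
  defines "G \<equiv> {i\<in>Fl. crosses M first h i k \<and> P i \<le> P f}"
  shows "\<exists>\<tau>'. 0 \<le> \<tau>' \<and> \<tau>' \<le> \<tau> \<and> (\<forall>i\<in>G. A i (in_idx M first i k) \<tau>' \<le> A i k \<tau>) \<and>
           R k * (\<tau> - \<tau>' - \<epsilon> - (T k + max_lp Fl M first h P Lmax f k / R k))
             \<le> (\<Sum>i\<in>G. A i k \<tau> - A i (in_idx M first i k) \<tau>')"
proof (rule np_fp_group_service[OF fp[OF k] strict[OF k]])
  show "mono (A i k)" if "i \<in> {i\<in>Fl. crosses M first h i k}" for i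
    using cumul_out that unfolding cumulative_def by auto
  show "A i (in_idx M first i k) 0 \<le> A i k 0" if "i \<in> G" for i
    using that input_cumulative cumul_out unfolding G_def cumulative_def by auto
  show "Lmax j \<le> max_lp Fl M first h P Lmax f k" if "j \<in> {i\<in>Fl. crosses M first h i k} - G" for j
    using that Lmax_le_max_lp unfolding G_def lp_set_def by auto
qed (use finite_Fl R_pos[OF k] T_nonneg[OF k] max_lp_nonneg assms in \<open>auto simp: G_def\<close>)

end

locale fp_ring_subpath = fp_ring_network +
  fixes f :: 'f and n :: nat
  assumes f: "f \<in> Fl" and n: "1 \<le> n" "n \<le> h f"
begin

definition node :: "nat \<Rightarrow> nat" where
  "node m = ring_add M (first f) (m - 1)"

definition hp_rate :: "nat \<Rightarrow> real" where
  "hp_rate k = (\<Sum>j\<in>hp_set Fl M first h P f k. \<rho> j)"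

definition Rsub :: real where
  "Rsub = Min ((\<lambda>k. R k - hp_rate k) ` subpath_nodes M first f n)"

definition lat :: "nat \<Rightarrow> real" where
  "lat k = T k + max_lp Fl M first h P Lmax f k / R k"

definition burst :: "'f \<Rightarrow> real" where
  "burst i = \<sigma> i (ring_prev M (first f))
       * (if crosses M first h i (first f) \<and> first i \<noteq> first f then 1 else 0)
     + \<sigma> i 0 * (if crosses M first h f (first i) then 1 else 0)"

abbreviation K :: "'f set" where
  "K \<equiv> K_le Fl M first h P f n"

definition Tsub :: real where
  "Tsub = (\<Sum>k\<in>subpath_nodes M first f n. lat k)
     + (\<Sum>i\<in>K. \<sigma> i (ring_prev M (first f))
           * (if crosses M first h i (first f) \<and> first i \<noteq> first f then 1 else 0) / Rsub)
     + (\<Sum>i\<in>K. (\<sigma> i 0 * (if crosses M first h f (first i) then 1 else 0)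
           + \<rho> i * (\<Sum>j\<in>subpath_nodes M first f n \<inter> path_nodes M first h i. lat j)) / Rsub)"

definition slack :: real where
  "slack = real n * Rsub + (\<Sum>m=1..n. hp_rate (node m))"

definition group :: "nat \<Rightarrow> 'f set" where
  "group m = {i\<in>Fl. crosses M first h i (node m) \<and> P i \<le> P f}"

definition hop_increment :: "(nat \<Rightarrow> real) \<Rightarrow> 'f \<Rightarrow> nat \<Rightarrow> real" where
  "hop_increment tt i m = A i (node m) (tt m) - A i (in_idx M first i (node m)) (tt (m - 1))"

definition service_chain :: "real \<Rightarrow> (nat \<Rightarrow> real) \<Rightarrow> bool" where
  "service_chain \<epsilon> tt \<longleftrightarrow> (\<forall>m\<le>n. 0 \<le> tt m) \<and>
     (\<forall>m. 1 \<le> m \<longrightarrow> m \<le> n \<longrightarrow> tt (m - 1) \<le> tt m \<and>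
        (\<forall>i\<in>group m. A i (in_idx M first i (node m)) (tt (m - 1)) \<le> A i (node m) (tt m)) \<and>
        R (node m) * (tt m - tt (m - 1) - \<epsilon> - lat (node m)) \<le> (\<Sum>i\<in>group m. hop_increment tt i m))"

lemma first_f: "1 \<le> first f" "first f \<le> M"
  using first[OF f] by auto

lemma node_in_range: "1 \<le> node m \<and> node m \<le> M"
  unfolding node_def using ring_add_in_range M by blast

lemma node_one: "node 1 = first f"
  unfolding node_def using ring_add_zero first_f by simp

lemma node_inj:
  assumes "1 \<le> m1" "m1 \<le> n" "1 \<le> m2" "m2 \<le> n" "node m1 = node m2"
  shows "m1 = m2"
proof -
  have "m1 - 1 < M" "m2 - 1 < M" using assms n hops[OF f] by auto
  then have "m1 - 1 = m2 - 1"
    using ring_add_inj[of "first f" "m1 - 1" M "m2 - 1"] first_f assms(5) unfolding node_def by simp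
  then show ?thesis using assms by simp
qed

lemma inj_on_node: "inj_on node {1..n}"
  using node_inj by (auto simp: inj_on_def)

lemma ring_prev_node: "2 \<le> m \<Longrightarrow> ring_prev M (node m) = node (m - 1)"
  unfolding node_def using ring_prev_ring_add[of "first f" M "m - 1"] first_f M by simp

lemma node_ne_first: "2 \<le> m \<Longrightarrow> m \<le> n \<Longrightarrow> node m \<noteq> first f"
  using node_inj[of m 1] n node_one by auto

lemma subpath_eq: "subpath_nodes M first f n = node ` {1..n}"
proof
  show "subpath_nodes M first f n \<subseteq> node ` {1..n}"
    unfolding subpath_nodes_def node_def
    by (force intro: image_eqI[where x = "Suc m" for m])
qed (force simp: subpath_nodes_def node_def)

lemma sum_subpath: "(\<Sum>k\<in>subpath_nodes M first f n. g k) = (\<Sum>m=1..n. g (node m))"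
  unfolding subpath_eq sum.reindex[OF inj_on_node] by simp

lemma crosses_node: "1 \<le> m \<Longrightarrow> m \<le> n \<Longrightarrow> crosses M first h f (node m)"
  unfolding crosses_def path_nodes_def subpath_nodes_def node_def using n
  by (intro CollectI exI[of _ "m - 1"]) simp

lemma finite_K: "finite K" and f_notin_K: "f \<notin> K" and K_subset: "K \<subseteq> Fl"
  using finite_Fl unfolding K_le_def by auto

lemma hp_rate_node:
  assumes "1 \<le> m" "m \<le> n"
  shows "hp_rate (node m) = (\<Sum>i\<in>K. if crosses M first h i (node m) then \<rho> i else 0)"
proof -
  have "hp_set Fl M first h P f (node m) = {i\<in>K. crosses M first h i (node m)}"
    unfolding hp_set_def K_le_def subpath_eq using assms by auto
  then show ?thesis unfolding hp_rate_def using finite_K by (simp add: sum.inter_filter)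
qed

lemma sum_hp_rate_weighted:
  "(\<Sum>m=1..n. hp_rate (node m) * x m)
     = (\<Sum>i\<in>K. \<rho> i * (\<Sum>m=1..n. if crosses M first h i (node m) then x m else 0))"
proof -
  have "(\<Sum>m=1..n. hp_rate (node m) * x m)
      = (\<Sum>m=1..n. \<Sum>i\<in>K. (if crosses M first h i (node m) then \<rho> i else 0) * x m)"
    by (intro sum.cong refl) (simp add: hp_rate_node sum_distrib_right)
  also have "\<dots> = (\<Sum>i\<in>K. \<Sum>m=1..n. (if crosses M first h i (node m) then \<rho> i else 0) * x m)"
    by (rule sum.swap)
  also have "\<dots> = (\<Sum>i\<in>K. \<rho> i * (\<Sum>m=1..n. if crosses M first h i (node m) then x m else 0))"
    unfolding sum_distrib_left by (intro sum.cong refl) simp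
  finally show ?thesis .
qed

lemma hp_rate_nonneg: "0 \<le> hp_rate k"
  unfolding hp_rate_def hp_set_def by (rule sum_nonneg) (use rho_nonneg in auto)

lemma hp_rate_le: "1 \<le> k \<Longrightarrow> k \<le> M \<Longrightarrow> hp_rate k \<le> R k"
  using sum_mono2[of "{i\<in>Fl. crosses M first h i k}" "hp_set Fl M first h P f k" \<rho>]
    finite_Fl rho_nonneg stable[of k] unfolding hp_rate_def hp_set_def by fastforce

lemma Rsub_le: "1 \<le> m \<Longrightarrow> m \<le> n \<Longrightarrow> Rsub \<le> R (node m) - hp_rate (node m)"
  unfolding Rsub_def subpath_eq by (rule Min_le) auto

lemma Rsub_nonneg: "0 \<le> Rsub"
  unfolding Rsub_def subpath_eq using n hp_rate_le node_in_range
  by (subst Min_ge_iff) (auto simp: diff_ge_0_iff_ge)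

lemma lat_nonneg:
  assumes "1 \<le> k" "k \<le> M"
  shows "0 \<le> lat k"
  unfolding lat_def using T_nonneg[OF assms] R_pos[OF assms] max_lp_nonneg[of f k] by simp

lemma service_chain_exists:
  assumes "0 \<le> t" "0 < \<epsilon>"
  shows "\<exists>tt. tt n = t \<and> service_chain \<epsilon> tt"
proof -
  have "\<exists>tt. tt n = t \<and> (\<forall>m\<le>n. 0 \<le> tt m) \<and>
      (\<forall>m. 1 \<le> m \<longrightarrow> m \<le> n \<longrightarrow> tt (m - 1) \<le> tt m \<and>
        (\<forall>i\<in>group m. A i (in_idx M first i (node m)) (tt (m - 1)) \<le> A i (node m) (tt m)) \<and>
        R (node m) * (tt m - tt (m - 1) - \<epsilon> - lat (node m))
          \<le> (\<Sum>i\<in>group m. A i (node m) (tt m) - A i (in_idx M first i (node m)) (tt (m - 1))))"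
  proof (rule backward_chain_exists[OF _ assms(1)])
    fix m :: nat and \<tau> :: real
    assume "1 \<le> m" "m \<le> n" "0 \<le> \<tau>"
    show "\<exists>\<tau>'. 0 \<le> \<tau>' \<and> \<tau>' \<le> \<tau> \<and>
        (\<forall>i\<in>group m. A i (in_idx M first i (node m)) \<tau>' \<le> A i (node m) \<tau>) \<and>
        R (node m) * (\<tau> - \<tau>' - \<epsilon> - lat (node m))
          \<le> (\<Sum>i\<in>group m. A i (node m) \<tau> - A i (in_idx M first i (node m)) \<tau>')"
      using node_group_service[of "node m" \<tau> \<epsilon> f] node_in_range \<open>0 \<le> \<tau>\<close> assms(2)
      unfolding group_def lat_def by blast
  qed
  then show ?thesis unfolding service_chain_def hop_increment_def by auto
qed

lemma service_chain_mono:
  assumes "service_chain \<epsilon> tt" "x \<le> y" "y \<le> n"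
  shows "tt x \<le> tt y"
  using assms(2,3)
proof (induction y rule: dec_induct)
  case (step y)
  then show ?case using assms(1) unfolding service_chain_def by (fastforce dest: spec[of _ "Suc y"])
qed simp

lemma f_in_group: "1 \<le> m \<Longrightarrow> m \<le> n \<Longrightarrow> f \<in> group m"
  unfolding group_def using f crosses_node by simp

lemma in_idx_node:
  assumes "i \<in> Fl" "2 \<le> m" "node m \<noteq> first i"
  shows "in_idx M first i (node m) = node (m - 1)"
  using assms ring_prev_node by (simp add: in_idx_def)

lemma f_hop_increments_telescope:
  "(\<Sum>m=1..n. hop_increment tt f m) = A f (node n) (tt n) - A f 0 (tt 0)"
proof -
  have "(\<Sum>m=1..n. hop_increment tt f m)
      = A f (node n) (tt n) - A f (in_idx M first f (node 1)) (tt (1 - 1))"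
    unfolding hop_increment_def
    by (rule sum_relay_telescope[where Out = "\<lambda>m. A f (node m)"])
      (use n in_idx_node[OF f] node_ne_first in auto)
  then show ?thesis using node_one by (simp add: in_idx_def)
qed

lemma f_hop_increments_nonneg:
  assumes "service_chain \<epsilon> tt"
  shows "0 \<le> (\<Sum>m=1..n. hop_increment tt f m)"
  using assms f_in_group unfolding service_chain_def hop_increment_def
  by (intro sum_nonneg) force

lemma sum_group_hop_increments:
  "(\<Sum>m=1..n. \<Sum>i\<in>group m. hop_increment tt i m) = (\<Sum>m=1..n. hop_increment tt f m)
     + (\<Sum>i\<in>K. \<Sum>m=1..n. if crosses M first h i (node m) then hop_increment tt i m else 0)"
proof -
  define W where
    "W i = (\<Sum>m=1..n. if crosses M first h i (node m) \<and> P i \<le> P f then hop_increment tt i m else 0)"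
    for i
  have "(\<Sum>m=1..n. \<Sum>i\<in>group m. hop_increment tt i m) = (\<Sum>m=1..n. \<Sum>i\<in>Fl.
      if crosses M first h i (node m) \<and> P i \<le> P f then hop_increment tt i m else 0)"
    unfolding group_def using finite_Fl by (simp add: sum.inter_filter)
  also have "\<dots> = (\<Sum>i\<in>Fl. W i)" unfolding W_def by (rule sum.swap)
  also have "\<dots> = (\<Sum>i\<in>insert f K. W i)"
  proof (rule sum.mono_neutral_right[OF finite_Fl])
    show "insert f K \<subseteq> Fl" using f K_subset by auto
    show "\<forall>i\<in>Fl - insert f K. W i = 0"
      unfolding W_def K_le_def subpath_eq by (auto intro!: sum.neutral split: if_splits)
  qed
  also have "\<dots> = W f + (\<Sum>i\<in>K. W i)" using finite_K f_notin_K by simp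
  also have "W f = (\<Sum>m=1..n. hop_increment tt f m)"
    unfolding W_def using crosses_node by (intro sum.cong) auto
  also have "(\<Sum>i\<in>K. W i)
      = (\<Sum>i\<in>K. \<Sum>m=1..n. if crosses M first h i (node m) then hop_increment tt i m else 0)"
    unfolding W_def K_le_def by (intro sum.cong) auto
  finally show ?thesis .
qed

lemma sum_subpath_inter_path:
  "(\<Sum>j\<in>subpath_nodes M first f n \<inter> path_nodes M first h i. g j)
     = (\<Sum>m=1..n. if crosses M first h i (node m) then g (node m) else 0)"
proof -
  have "finite (subpath_nodes M first f n)" unfolding subpath_eq by simp
  then have "(\<Sum>j\<in>subpath_nodes M first f n \<inter> path_nodes M first h i. g j)
      = (\<Sum>j\<in>subpath_nodes M first f n. if j \<in> path_nodes M first h i then g j else 0)"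
    by (rule sum.inter_restrict)
  then show ?thesis unfolding sum_subpath crosses_def .
qed

lemma entry_bursts_le:
  assumes i: "i \<in> K"
  shows "(\<Sum>m=1..n. if crosses M first h i (node m) \<and> (m = 1 \<or> node m = first i)
            then \<sigma> i (in_idx M first i (node m)) else 0) \<le> burst i"
proof -
  let ?enters = "crosses M first h i (first f) \<and> first i \<noteq> first f"
  have iFl: "i \<in> Fl" using i K_subset by auto
  have "(\<Sum>m=1..n. if crosses M first h i (node m) \<and> (m = 1 \<or> node m = first i)
            then \<sigma> i (in_idx M first i (node m)) else 0)
      \<le> (\<Sum>m=1..n. (if node m = first i then \<sigma> i 0 else 0)
            + (if m = 1 then if ?enters then \<sigma> i (ring_prev M (first f)) else 0 else 0))"
    using sigma_nonneg[OF iFl] node_one by (intro sum_mono) (auto simp: in_idx_def)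
  also have "\<dots> = (\<Sum>k\<in>subpath_nodes M first f n. if k = first i then \<sigma> i 0 else 0)
      + (if ?enters then \<sigma> i (ring_prev M (first f)) else 0)"
    unfolding sum.distrib sum_subpath using n by (simp add: sum.delta)
  also have "\<dots> \<le> burst i"
    using finite_Fl sigma_nonneg[OF iFl] crosses_node
    unfolding burst_def subpath_eq by (auto simp: sum.delta)
  finally show ?thesis .
qed

lemma hp_hop_increments_le:
  assumes chain: "service_chain \<epsilon> tt" and i: "i \<in> K"
  shows "(\<Sum>m=1..n. if crosses M first h i (node m) then hop_increment tt i m else 0)
    \<le> burst i + \<rho> i * (\<Sum>m=1..n. if crosses M first h i (node m) then tt m - tt (m - 1) else 0)"
proof -
  have iFl: "i \<in> Fl" using i K_subset by auto
  define c where "c m = crosses M first h i (node m)" for m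
  define ent where "ent m = (c m \<and> (m = 1 \<or> node m = first i))" for m
  have "(\<Sum>m=1..n. if c m then hop_increment tt i m else 0)
      \<le> (\<Sum>m=1..n. if ent m then \<sigma> i (in_idx M first i (node m)) else 0)
        + \<rho> i * (\<Sum>m=1..n. if c m then tt m - tt (m - 1) else 0)"
    unfolding hop_increment_def
  proof (rule flow_hop_increments_le[where Out = "\<lambda>m. A i (node m)" and ent = ent])
    show "A i (node m) t \<le> A i (in_idx M first i (node m)) t" if "1 \<le> m" "m \<le> n" "c m" for m t
      using np_fp_server_out_le_in[OF fp] node_in_range iFl that unfolding c_def by blast
    show "2 \<le> m \<and> c (m - 1) \<and> A i (in_idx M first i (node m)) = A i (node (m - 1))"
      if "1 \<le> m" "m \<le> n" "c m" "\<not> ent m" for m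
      using that crosses_ring_prev[of M first h i "node m"] first[OF iFl] M ring_prev_node
        in_idx_node[OF iFl] unfolding ent_def c_def by auto
    show "A i (in_idx M first i (node m)) y
        \<le> A i (in_idx M first i (node m)) x + \<sigma> i (in_idx M first i (node m)) + \<rho> i * (y - x)"
      if "1 \<le> m" "m \<le> n" "ent m" "0 \<le> x" "x \<le> y" for m x y
      using that leaky_bucket_increment_le[OF arrival input_cumulative rho_nonneg] iFl
      unfolding ent_def c_def by blast
    show "tt x \<le> tt y" if "x \<le> y" "y \<le> n" for x y
      using service_chain_mono[OF chain that] .
    show "0 \<le> tt 0" using chain unfolding service_chain_def by simp
  qed (simp add: ent_def)
  then show ?thesis using entry_bursts_le[OF i] unfolding ent_def c_def by linarith
qed

lemma slack_nonneg: "0 \<le> slack"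
  unfolding slack_def using Rsub_nonneg hp_rate_nonneg by (simp add: sum_nonneg)

lemma Rsub_mult_Tsub:
  assumes "0 < Rsub"
  shows "Rsub * Tsub = Rsub * (\<Sum>m=1..n. lat (node m))
    + (\<Sum>i\<in>K. \<rho> i * (\<Sum>j\<in>subpath_nodes M first f n \<inter> path_nodes M first h i. lat j))
    + (\<Sum>i\<in>K. burst i)"
  using assms unfolding Tsub_def burst_def sum_subpath
  by (simp add: sum_divide_distrib[symmetric] sum.distrib field_simps)

lemma sum_group_hop_increments_le:
  assumes "service_chain \<epsilon> tt"
  shows "(\<Sum>m=1..n. \<Sum>i\<in>group m. hop_increment tt i m)
      - (\<Sum>m=1..n. hp_rate (node m) * (tt m - tt (m - 1)))
    \<le> (\<Sum>m=1..n. hop_increment tt f m) + (\<Sum>i\<in>K. burst i)"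
proof -
  have "(\<Sum>i\<in>K. \<Sum>m=1..n. if crosses M first h i (node m) then hop_increment tt i m else 0)
      \<le> (\<Sum>i\<in>K. burst i + \<rho> i
          * (\<Sum>m=1..n. if crosses M first h i (node m) then tt m - tt (m - 1) else 0))"
    by (rule sum_mono) (rule hp_hop_increments_le[OF assms])
  also have "\<dots> = (\<Sum>i\<in>K. burst i) + (\<Sum>m=1..n. hp_rate (node m) * (tt m - tt (m - 1)))"
    by (simp only: sum.distrib sum_hp_rate_weighted)
  finally show ?thesis unfolding sum_group_hop_increments by linarith
qed

text \<open>Summing the residual-rate inequality over the nodes; the flows in K pay for their
  interference through their bursts and their rates times the latencies they meet.\<close>
lemma chain_output_lower_bound:
  assumes chain: "service_chain \<epsilon> tt" and "0 < \<epsilon>"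
  shows "Rsub * (tt n - tt 0) - Rsub * (\<Sum>m=1..n. lat (node m))
      - (\<Sum>i\<in>K. \<rho> i * (\<Sum>j\<in>subpath_nodes M first f n \<inter> path_nodes M first h i. lat j))
      - (\<Sum>i\<in>K. burst i) - \<epsilon> * slack
    \<le> A f (node n) (tt n) - A f 0 (tt 0)"
proof -
  define H where "H m = hp_rate (node m)" for m
  define d where "d m = tt m - tt (m - 1)" for m
  have "Rsub * (d m - \<epsilon>) - (Rsub + H m) * lat (node m) - H m * \<epsilon>
      \<le> (\<Sum>i\<in>group m. hop_increment tt i m) - H m * d m" if m: "m \<in> {1..n}" for m
  proof (rule residual_rate_latency_le)
    show "Rsub \<le> R (node m) - H m" using Rsub_le m unfolding H_def by simp
    show "0 \<le> lat (node m)" using lat_nonneg node_in_range by simp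
    show "0 \<le> (\<Sum>i\<in>group m. hop_increment tt i m)"
      using chain m unfolding service_chain_def hop_increment_def by (force intro: sum_nonneg)
    show "R (node m) * (d m - \<epsilon> - lat (node m)) \<le> (\<Sum>i\<in>group m. hop_increment tt i m)"
      using chain m unfolding service_chain_def d_def by simp
  qed (use Rsub_nonneg hp_rate_nonneg \<open>0 < \<epsilon>\<close> in \<open>simp_all add: H_def\<close>)
  then have "(\<Sum>m=1..n. Rsub * (d m - \<epsilon>) - (Rsub + H m) * lat (node m) - H m * \<epsilon>)
      \<le> (\<Sum>m=1..n. (\<Sum>i\<in>group m. hop_increment tt i m) - H m * d m)"
    by (rule sum_mono)
  moreover have "(\<Sum>m=1..n. (\<Sum>i\<in>group m. hop_increment tt i m) - H m * d m)
      = (\<Sum>m=1..n. \<Sum>i\<in>group m. hop_increment tt i m) - (\<Sum>m=1..n. H m * d m)"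
    by (rule sum_subtractf)
  moreover have "(\<Sum>m=1..n. H m * lat (node m))
      = (\<Sum>i\<in>K. \<rho> i * (\<Sum>j\<in>subpath_nodes M first f n \<inter> path_nodes M first h i. lat j))"
    unfolding H_def sum_hp_rate_weighted sum_subpath_inter_path ..
  moreover have "(\<Sum>m=1..n. Rsub * (d m - \<epsilon>) - (Rsub + H m) * lat (node m) - H m * \<epsilon>)
      = Rsub * (tt n - tt 0) - \<epsilon> * slack - Rsub * (\<Sum>m=1..n. lat (node m))
        - (\<Sum>m=1..n. H m * lat (node m))"
  proof -
    have "(\<Sum>m=1..n. Rsub * (d m - \<epsilon>) - (Rsub + H m) * lat (node m) - H m * \<epsilon>)
        = Rsub * (\<Sum>m=1..n. d m) - \<epsilon> * slack - Rsub * (\<Sum>m=1..n. lat (node m))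
          - (\<Sum>m=1..n. H m * lat (node m))"
      unfolding slack_def H_def
      by (simp add: algebra_simps sum.distrib sum_subtractf sum_distrib_left sum_distrib_right)
    also have "(\<Sum>m=1..n. d m) = tt n - tt 0"
      using sum_relay_telescope[of 1 n "\<lambda>m x. x" "\<lambda>m x. x" tt] n unfolding d_def by simp
    finally show ?thesis .
  qed
  ultimately show ?thesis
    using sum_group_hop_increments_le[OF chain] f_hop_increments_telescope[of tt]
    unfolding H_def d_def by linarith
qed

lemma rate_latency_chain_le:
  assumes chain: "service_chain \<epsilon> tt" and "0 < \<epsilon>"
  shows "rate_latency Rsub Tsub (tt n - tt 0) \<le> A f (node n) (tt n) - A f 0 (tt 0) + \<epsilon> * slack"
proof -
  have lower: "0 \<le> A f (node n) (tt n) - A f 0 (tt 0) + \<epsilon> * slack"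
    using f_hop_increments_nonneg[OF chain] f_hop_increments_telescope slack_nonneg \<open>0 < \<epsilon>\<close>
    by (simp add: add_increasing2)
  show ?thesis
  proof (cases "0 < Rsub \<and> Tsub \<le> tt n - tt 0")
    case True
    then have "rate_latency Rsub Tsub (tt n - tt 0) = Rsub * (tt n - tt 0) - Rsub * Tsub"
      unfolding rate_latency_def by (simp add: algebra_simps)
    then show ?thesis
      using chain_output_lower_bound[OF assms] Rsub_mult_Tsub True by linarith
  next
    case False
    then have "rate_latency Rsub Tsub (tt n - tt 0) = 0"
      using Rsub_nonneg unfolding rate_latency_def by auto
    then show ?thesis using lower by simp
  qed
qed

theorem service_curve_subpath: "service_curve (A f 0) (A f (node n)) (rate_latency Rsub Tsub)"
  unfolding service_curve_def
proof (intro allI impI)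
  fix t :: real
  assume "0 \<le> t"
  show "minplus_conv (A f 0) (rate_latency Rsub Tsub) t \<le> A f (node n) t"
  proof (rule field_le_epsilon)
    fix e :: real
    assume "0 < e"
    define \<epsilon> where "\<epsilon> = e / (slack + 1)"
    have "0 < \<epsilon>" unfolding \<epsilon>_def using \<open>0 < e\<close> slack_nonneg by simp
    have "\<epsilon> * slack \<le> e"
      unfolding \<epsilon>_def using \<open>0 < e\<close> slack_nonneg by (simp add: field_simps)
    obtain tt where tt: "tt n = t" "service_chain \<epsilon> tt"
      using service_chain_exists[OF \<open>0 \<le> t\<close> \<open>0 < \<epsilon>\<close>] by blast
    have "0 \<le> tt 0" using tt(2) unfolding service_chain_def by simp
    moreover have "tt 0 \<le> t" using service_chain_mono[OF tt(2), of 0 n] tt(1) by simp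
    moreover have "0 \<le> rate_latency Rsub Tsub s" for s
      unfolding rate_latency_def using Rsub_nonneg by simp
    ultimately have "minplus_conv (A f 0) (rate_latency Rsub Tsub) t
        \<le> A f 0 (t - (t - tt 0)) + rate_latency Rsub Tsub (t - tt 0)"
      by (intro minplus_conv_le[OF cumul_src[OF f], where b = 0]) auto
    then show "minplus_conv (A f 0) (rate_latency Rsub Tsub) t \<le> A f (node n) t + e"
      using rate_latency_chain_le[OF tt(2) \<open>0 < \<epsilon>\<close>] \<open>\<epsilon> * slack \<le> e\<close> tt(1) by simp
  qed
qed

end

theorem corollary2:
  fixes M :: nat and Fl :: "'f set" and first h P :: "'f \<Rightarrow> nat"
    and Lmax \<rho> :: "'f \<Rightarrow> real" and \<sigma> :: "'f \<Rightarrow> nat \<Rightarrow> real"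
    and R T :: "nat \<Rightarrow> real"
    and A :: "'f \<Rightarrow> nat \<Rightarrow> real \<Rightarrow> real"
    and Tx :: "nat \<Rightarrow> ('f \<times> real \<times> real) set"
    and f :: 'f and n :: nat
  assumes M: "M \<ge> 1"
    and finite_Fl: "finite Fl"
    and first: "\<And>i. i \<in> Fl \<Longrightarrow> 1 \<le> first i \<and> first i \<le> M"
    and hops: "\<And>i. i \<in> Fl \<Longrightarrow> 1 \<le> h i \<and> h i \<le> M"
    and Lmax_pos: "\<And>i. i \<in> Fl \<Longrightarrow> Lmax i > 0"
    and rho_nonneg: "\<And>i. i \<in> Fl \<Longrightarrow> \<rho> i \<ge> 0"
    and sigma_nonneg: "\<And>i m. i \<in> Fl \<Longrightarrow> \<sigma> i m \<ge> 0"
    and R_pos: "\<And>k. 1 \<le> k \<Longrightarrow> k \<le> M \<Longrightarrow> R k > 0"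
    and T_nonneg: "\<And>k. 1 \<le> k \<Longrightarrow> k \<le> M \<Longrightarrow> T k \<ge> 0"
    and stable: "\<And>k. 1 \<le> k \<Longrightarrow> k \<le> M \<Longrightarrow>
                   (\<Sum>i\<in>{i\<in>Fl. crosses M first h i k}. \<rho> i) \<le> R k"
    and cumul_src: "\<And>i. i \<in> Fl \<Longrightarrow> cumulative (A i 0)"
    and cumul_out: "\<And>i k. i \<in> Fl \<Longrightarrow> crosses M first h i k \<Longrightarrow> cumulative (A i k)"
    and arrival: "\<And>i k. i \<in> Fl \<Longrightarrow> crosses M first h i k \<Longrightarrow>
                   arrival_curve (A i (in_idx M first i k))
                     (\<lambda>t. \<sigma> i (in_idx M first i k) + \<rho> i * t)"
    and strict: "\<And>k. 1 \<le> k \<Longrightarrow> k \<le> M \<Longrightarrow>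
                   strict_service {i\<in>Fl. crosses M first h i k}
                     (\<lambda>i. A i (in_idx M first i k)) (\<lambda>i. A i k) (rate_latency (R k) (T k))"
    and fp: "\<And>k. 1 \<le> k \<Longrightarrow> k \<le> M \<Longrightarrow>
                   np_fp_server {i\<in>Fl. crosses M first h i k} P Lmax
                     (\<lambda>i. A i (in_idx M first i k)) (\<lambda>i. A i k) (Tx k)"
    and f: "f \<in> Fl"
    and n: "1 \<le> n" "n \<le> h f"
  shows
    "let sub = subpath_nodes M first f n;
         Rsub = Min ((\<lambda>k. R k - (\<Sum>j\<in>hp_set Fl M first h P f k. \<rho> j)) ` sub);
         lat = (\<lambda>k. T k + max_lp Fl M first h P Lmax f k / R k);
         K = K_le Fl M first h P f n;
         Tsub = (\<Sum>k\<in>sub. lat k)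
           + (\<Sum>i\<in>K. \<sigma> i (ring_prev M (first f))
                 * (if crosses M first h i (first f) \<and> first i \<noteq> first f then 1 else 0) / Rsub)
           + (\<Sum>i\<in>K. (\<sigma> i 0 * (if crosses M first h f (first i) then 1 else 0)
                 + \<rho> i * (\<Sum>j\<in>sub \<inter> path_nodes M first h i. lat j)) / Rsub)
     in service_curve (A f 0) (A f (ring_add M (first f) (n - 1))) (rate_latency Rsub Tsub)"
proof -
  interpret fp_ring_subpath M Fl first h P Lmax \<rho> \<sigma> R T A Tx f n
    by unfold_locales (fact assms)+
  show ?thesis
    using service_curve_subpath
    unfolding Let_def Tsub_def Rsub_def hp_rate_def lat_def node_def by simp
qed

end
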